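(* Let $\lambda,\mu,\rho,\mathsf D>0$, $X=[-\frac{\mu\mathsf D}{2\lambda},\frac{\mu\mathsf D}{2\lambda}]$, and let $\hat f=\hat f_0$, i.e. $\hat f(x,y)=f(x,\hat y)$. 1. For $f=F_{0,0,\lambda,\mu,0}$ (i.e. $f(x,y)=-\frac{\lambda x^2}2+\mu xy$) and $Y=[-\frac12\mathsf D,\frac12\mathsf D]$, there exist $\hat y\in Y$ and $x^*\in X$ such that $\hat\varphi_{2\lambda}'(x^* )=0$ while $|\varphi_{2\lambda}'(x^* )|\ge\frac{\mu\mathsf D}{2}$. 2. If $\mu\ge\sqrt{2\lambda\rho/\mathsf D}$, then for $f=S_{\lambda,\rho,\mathsf D}$ and $Y=[0,\mathsf D]$ there exist $\hat y\in Y$ and $x^*\in X$ such that $\hat\varphi_{2\lambda}'(x^* )=0$ while $|\varphi_{2\lambda}'(x^* )|\ge\frac{\sqrt{\lambda\rho\mathsf D}}{3}$.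
   Context: For $k\in\mathbb N\cup\{0\}$, $s\in\{\pm1,0\}$, $\lambda>0$, $\mu\ge0$, $\rho\ge0$: $F_{k,s,\lambda,\mu,\rho}(x,y)=-\frac{\lambda x^2}{2}+\mu xy+\frac{s\rho|y|^{k+1}}{(k+1)!}$ on $\mathbb R\times\mathbb R$. Also $S_{\lambda,\rho,\mathsf D}(x,y)=-\frac{\lambda x^2}{4}+\frac{\rho y}{2}\big(\tanh\big(\sqrt{\tfrac{\lambda}{\rho\mathsf D}}\,x\big)-1\big)$. Given $f$, $X,Y\subseteq\mathbb R$ and $\hat y\in Y$: $\varphi(x)=\max_{y\in Y}f(x,y)$, $\hat\varphi(x)=\max_{y\in Y}\hat f(x,y)$, and for a function $\phi$ on $X$, $\phi_{2\lambda}(x)=\min_{u\in X}\{\phi(u)+\lambda(u-x)^2\}$ (Moreau envelope with parameter $2\lambda$); $'$ denotes the derivative in $x$. *)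

theory Defs
  imports "HOL-Analysis.Analysis"
begin

definition F_fun :: "nat \<Rightarrow> real \<Rightarrow> real \<Rightarrow> real \<Rightarrow> real \<Rightarrow> real \<Rightarrow> real \<Rightarrow> real" where
  "F_fun k s lam mu rho x y =
     - lam * x\<^sup>2 / 2 + mu * x * y + s * rho * \<bar>y\<bar> ^ (k + 1) / fact (k + 1)"

definition S_fun :: "real \<Rightarrow> real \<Rightarrow> real \<Rightarrow> real \<Rightarrow> real \<Rightarrow> real" where
  "S_fun lam rho D x y =
     - lam * x\<^sup>2 / 4 + rho * y / 2 * (tanh (sqrt (lam / (rho * D)) * x) - 1)"

definition max_fun :: "(real \<Rightarrow> real \<Rightarrow> real) \<Rightarrow> real set \<Rightarrow> real \<Rightarrow> real" where
  "max_fun f Y x = (SUP y\<in>Y. f x y)"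

definition hat_fun :: "(real \<Rightarrow> real \<Rightarrow> real) \<Rightarrow> real \<Rightarrow> real \<Rightarrow> real \<Rightarrow> real" where
  "hat_fun f yh x y = f x yh"

text \<open>Moreau envelope with parameter 2 lam: phi_{2 lam}(x) = min_{u in X} phi(u) + lam (u-x)^2\<close>
definition moreau_env :: "(real \<Rightarrow> real) \<Rightarrow> real set \<Rightarrow> real \<Rightarrow> real \<Rightarrow> real" where
  "moreau_env phi X lam x = (INF u\<in>X. phi u + lam * (u - x)\<^sup>2)"

end

theory Submission
  imports Defs
begin

text \<open>
  If \<open>p \<in> X\<close> minimises \<open>u \<mapsto> \<phi> u + \<lambda> (u - x)\<^sup>2\<close> over \<open>X\<close> with a quadratic margin,
  then the Moreau envelope \<open>\<phi>\<^sub>2\<^sub>\<lambda>\<close> is differentiable at \<open>x\<close> with derivative \<open>2 \<lambda> (x - p)\<close>,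
  since it is squeezed between two parabolas touching at \<open>x\<close>.

  For the bilinear \<open>f\<close>, \<open>\<phi> u = - \<lambda> u\<^sup>2 / 2 + (\<mu> D / 2) \<bar>u\<bar>\<close>; its kink at \<open>0\<close> makes \<open>0\<close>
  the proximal point of \<open>x\<^sup>* = \<mu> D / (4 \<lambda>)\<close>, so \<open>\<phi>\<^sub>2\<^sub>\<lambda>' x\<^sup>* = \<mu> D / 2\<close>, whereas for
  \<open>y = D / 4\<close> the surrogate is a concave parabola with vertex \<open>x\<^sup>*\<close>, which is therefore its own
  proximal point.  For \<open>S\<close>, \<open>\<phi> u = - \<lambda> u\<^sup>2 / 4\<close> (attained at \<open>y = 0\<close>) has proximal point
  \<open>4 x / 3\<close>; the anchor \<open>y\<close> is tuned so that \<open>x\<^sup>* = \<surd>(\<rho> D / \<lambda>) / 2\<close> is a stationary point,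
  hence by convexity the proximal point, of the surrogate's proximal objective.
\<close>

lemma DERIV_quadratic_remainder:
  fixes f :: "real \<Rightarrow> real"
  assumes "\<And>x. \<bar>f x - f x0 - d * (x - x0)\<bar> \<le> K * (x - x0)\<^sup>2"
  shows "(f has_real_derivative d) (at x0)"
  unfolding has_field_derivative_def
proof (rule has_derivativeI_sandwich[of 1 _ _ _ _ "\<lambda>x. K * \<bar>x - x0\<bar>"])
  show "norm (f x - f x0 - d * (x - x0)) / norm (x - x0) \<le> K * \<bar>x - x0\<bar>" if "x \<noteq> x0" for x
    using assms[of x] that by (simp add: divide_le_eq power2_eq_square abs_mult_self_eq mult.assoc)
  show "((\<lambda>x. K * \<bar>x - x0\<bar>) \<longlongrightarrow> 0) (at x0)"
    by (auto intro!: tendsto_eq_intros)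
qed (auto intro: bounded_linear_mult_right)

lemma moreau_env_between_parabolas:
  fixes phi :: "real \<Rightarrow> real"
  assumes m: "m > 0" and p: "p \<in> X"
    and prox: "\<And>u. u \<in> X \<Longrightarrow>
      phi p + lam * (p - x0)\<^sup>2 + m * (u - p)\<^sup>2 \<le> phi u + lam * (u - x0)\<^sup>2"
  defines "V \<equiv> phi p + lam * (p - x0)\<^sup>2" and "d \<equiv> 2 * lam * (x0 - p)"
  shows "V + d * (x - x0) + (lam - lam\<^sup>2 / m) * (x - x0)\<^sup>2 \<le> moreau_env phi X lam x"
    and "moreau_env phi X lam x \<le> V + d * (x - x0) + lam * (x - x0)\<^sup>2"
proof -
  have lower: "V + d * (x - x0) + (lam - lam\<^sup>2 / m) * (x - x0)\<^sup>2 \<le> phi u + lam * (u - x)\<^sup>2"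
    if "u \<in> X" for u
  proof -
    have "0 \<le> (m * (u - p) - lam * (x - x0))\<^sup>2 / m"
      using m by simp
    also have "\<dots> = m * (u - p)\<^sup>2 - 2 * lam * (u - p) * (x - x0) + lam\<^sup>2 / m * (x - x0)\<^sup>2"
      using m by (simp add: power2_eq_square field_simps)
    finally show ?thesis
      using prox[OF that] unfolding V_def d_def by (simp add: power2_eq_square algebra_simps)
  qed
  then show "V + d * (x - x0) + (lam - lam\<^sup>2 / m) * (x - x0)\<^sup>2 \<le> moreau_env phi X lam x"
    unfolding moreau_env_def using p by (intro cINF_greatest) auto
  have "bdd_below ((\<lambda>u. phi u + lam * (u - x)\<^sup>2) ` X)"
    using lower by (auto simp: bdd_below_def)
  then have "moreau_env phi X lam x \<le> phi p + lam * (p - x)\<^sup>2"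
    unfolding moreau_env_def using p by (intro cINF_lower) auto
  then show "moreau_env phi X lam x \<le> V + d * (x - x0) + lam * (x - x0)\<^sup>2"
    unfolding V_def d_def by (simp add: power2_eq_square algebra_simps)
qed

lemma moreau_env_has_real_derivative:
  fixes phi :: "real \<Rightarrow> real"
  assumes m: "m > 0" and p: "p \<in> X"
    and prox: "\<And>u. u \<in> X \<Longrightarrow>
      phi p + lam * (p - x0)\<^sup>2 + m * (u - p)\<^sup>2 \<le> phi u + lam * (u - x0)\<^sup>2"
  shows "(moreau_env phi X lam has_real_derivative 2 * lam * (x0 - p)) (at x0)"
proof (rule DERIV_quadratic_remainder[where K = "\<bar>lam\<bar> + lam\<^sup>2 / m"])
  fix x
  note bounds = moreau_env_between_parabolas[OF m p prox]
  have "moreau_env phi X lam x0 = phi p + lam * (p - x0)\<^sup>2"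
    using bounds[of x0] by simp
  moreover have "lam * (x - x0)\<^sup>2 \<le> \<bar>lam\<bar> * (x - x0)\<^sup>2" "- \<bar>lam\<bar> * (x - x0)\<^sup>2 \<le> lam * (x - x0)\<^sup>2"
    using abs_le_iff[of "lam * (x - x0)\<^sup>2" "\<bar>lam\<bar> * (x - x0)\<^sup>2"] by (simp_all add: abs_mult)
  moreover have "0 \<le> lam\<^sup>2 / m * (x - x0)\<^sup>2"
    using m by simp
  ultimately show "\<bar>moreau_env phi X lam x - moreau_env phi X lam x0 - 2 * lam * (x0 - p) * (x - x0)\<bar>
      \<le> (\<bar>lam\<bar> + lam\<^sup>2 / m) * (x - x0)\<^sup>2"
    using bounds[of x] unfolding abs_le_iff by (simp add: algebra_simps)
qed

lemma max_fun_eqI: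
  assumes "ym \<in> Y" and "\<And>y. y \<in> Y \<Longrightarrow> f x y \<le> f x ym"
  shows "max_fun f Y x = f x ym"
  unfolding max_fun_def using assms by (intro cSup_eq_maximum) auto

lemma max_fun_hat_fun: "Y \<noteq> {} \<Longrightarrow> max_fun (hat_fun f yh) Y = (\<lambda>x. f x yh)"
  unfolding max_fun_def hat_fun_def by auto

lemma max_fun_F_fun_bilinear:
  fixes lam mu r :: real
  assumes "0 \<le> mu" and "0 \<le> r"
  shows "max_fun (F_fun 0 0 lam mu 0) {- r .. r} = (\<lambda>x. - lam * x\<^sup>2 / 2 + mu * r * \<bar>x\<bar>)"
proof
  fix x
  have "mu * x * y \<le> mu * r * \<bar>x\<bar>" if "y \<in> {- r .. r}" for y
  proof -
    have xy: "x * y \<le> \<bar>x\<bar> * r"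
      using that abs_ge_self[of "x * y"] mult_left_mono[of "\<bar>y\<bar>" r "\<bar>x\<bar>"] by (auto simp: abs_mult abs_le_iff)
    show ?thesis
      using mult_left_mono[OF xy assms(1)] by (simp add: ac_simps)
  qed
  then show "max_fun (F_fun 0 0 lam mu 0) {- r .. r} x = - lam * x\<^sup>2 / 2 + mu * r * \<bar>x\<bar>"
    using assms(2)
    by (subst max_fun_eqI[where ym = "if 0 \<le> x then r else - r"]) (auto simp: F_fun_def ac_simps)
qed

lemma max_fun_S_fun:
  fixes lam rho D :: real
  assumes "0 \<le> rho" and "0 \<le> D"
  shows "max_fun (S_fun lam rho D) {0 .. D} = (\<lambda>x. - lam * x\<^sup>2 / 4)"
proof
  fix x
  have "rho * y / 2 * (tanh (sqrt (lam / (rho * D)) * x) - 1) \<le> 0" if "y \<in> {0 .. D}" for y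
    using that assms(1) tanh_real_lt_1 by (intro mult_nonneg_nonpos) (auto simp: less_imp_le)
  then show "max_fun (S_fun lam rho D) {0 .. D} x = - lam * x\<^sup>2 / 4"
    using assms(2) by (subst max_fun_eqI[where ym = 0]) (auto simp: S_fun_def)
qed

lemma abs_tanh_mult_one_minus_tanh_sq_le: "\<bar>tanh x * (1 - tanh x ^ 2)\<bar> \<le> (1 :: real)"
proof -
  have t: "\<bar>tanh x\<bar> \<le> 1"
    using tanh_real_bounds[of x] by auto
  then have "0 \<le> 1 - tanh x ^ 2"
    by (simp add: abs_square_le_1)
  then show ?thesis
    using t by (simp add: abs_mult mult_le_one)
qed

lemma quadratic_plus_tanh_stationary_imp_min:
  fixes k l B a x0 u :: real
  assumes "2 * \<bar>B\<bar> * a\<^sup>2 \<le> k"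
    and "k * x0 + l + B * a * (1 - tanh (a * x0) ^ 2) = 0"
  shows "k * x0\<^sup>2 / 2 + l * x0 + B * tanh (a * x0) \<le> k * u\<^sup>2 / 2 + l * u + B * tanh (a * u)"
proof -
  define G where "G u = k * u\<^sup>2 / 2 + l * u + B * tanh (a * u)" for u
  define G' where "G' u = k * u + l + B * a * (1 - tanh (a * u) ^ 2)" for u
  define G'' where "G'' u = k - 2 * B * a\<^sup>2 * (tanh (a * u) * (1 - tanh (a * u) ^ 2))" for u
  have G: "(G has_real_derivative G' u) (at u)" for u
    unfolding G_def G'_def by (auto intro!: derivative_eq_intros simp: power2_eq_square algebra_simps)
  have G': "(G' has_real_derivative G'' u) (at u)" for u
    unfolding G'_def G''_def by (auto intro!: derivative_eq_intros simp: power2_eq_square algebra_simps)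
  have "G'' u \<ge> 0" for u
  proof -
    have "2 * B * a\<^sup>2 * (tanh (a * u) * (1 - tanh (a * u) ^ 2))
        \<le> 2 * \<bar>B\<bar> * a\<^sup>2 * \<bar>tanh (a * u) * (1 - tanh (a * u) ^ 2)\<bar>"
      using abs_ge_self[of "2 * B * a\<^sup>2 * (tanh (a * u) * (1 - tanh (a * u) ^ 2))"] by (simp add: abs_mult)
    also have "\<dots> \<le> 2 * \<bar>B\<bar> * a\<^sup>2"
      using abs_tanh_mult_one_minus_tanh_sq_le by (simp add: mult_left_le)
    finally show ?thesis
      using assms(1) unfolding G''_def by linarith
  qed
  then have "convex_on UNIV G"
    using G G' by (intro f''_ge0_imp_convex) auto
  then have "G u - G x0 \<ge> G' x0 * (u - x0)"
    using G by (intro convex_on_imp_above_tangent) auto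
  then show ?thesis
    using assms(2) unfolding G_def G'_def by simp
qed

lemma tanh_half_sq_le: "tanh (1 / 2 :: real) ^ 2 \<le> 1 / 4"
proof -
  have "1 / 3 \<le> exp (-1 :: real)"
    using exp_le by (simp add: exp_minus divide_simps)
  then have "tanh (1 / 2 :: real) \<le> 1 / 2"
    by (simp add: tanh_real_altdef divide_le_eq)
  then show ?thesis
    using power_mono[of "tanh (1 / 2 :: real)" "1 / 2" 2] by (simp add: power_divide)
qed

lemma S_fun_anchor_prox_margin:
  fixes lam rho D u :: real
  assumes lam: "0 < lam" and rho: "0 < rho" and D: "0 < D"
  defines "s \<equiv> sqrt (rho * D / lam)" and "yh \<equiv> D / (2 * (1 - tanh (1 / 2) ^ 2))"
  shows "S_fun lam rho D (s / 2) yh + lam / 4 * (u - s / 2)\<^sup>2 \<le> S_fun lam rho D u yh + lam * (u - s / 2)\<^sup>2"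
proof -
  define T where "T = tanh (1 / 2 :: real)"
  have T: "3 / 4 \<le> 1 - T ^ 2"
    using tanh_half_sq_le unfolding T_def by simp
  have s: "0 < s" "rho * D = lam * s\<^sup>2"
    using lam rho D unfolding s_def by auto
  have yh: "0 \<le> yh" "yh \<le> D"
    using D T unfolding yh_def T_def[symmetric] by (auto simp: divide_le_eq)
  \<comment> \<open>up to an additive constant, both sides are \<open>S u yh + 3 \<lambda> / 4 (u - s / 2)\<^sup>2\<close>\<close>
  have "lam * (s / 2)\<^sup>2 / 2 + (- 3 * lam * (s / 2) / 2) * (s / 2) + rho * yh / 2 * tanh (1 / s * (s / 2))
      \<le> lam * u\<^sup>2 / 2 + (- 3 * lam * (s / 2) / 2) * u + rho * yh / 2 * tanh (1 / s * u)"
  proof (rule quadratic_plus_tanh_stationary_imp_min)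
    have "2 * \<bar>rho * yh / 2\<bar> * (1 / s)\<^sup>2 = lam * (yh / D)"
      using rho yh s lam D by (simp add: power_divide field_simps)
    also have "\<dots> \<le> lam"
      using lam D yh by (intro mult_left_le) auto
    finally show "2 * \<bar>rho * yh / 2\<bar> * (1 / s)\<^sup>2 \<le> lam" .
    have "rho * yh / 2 * (1 / s) * (1 - T ^ 2) = rho * D / (4 * s)"
      using T s(1) unfolding yh_def T_def[symmetric] by (simp add: field_simps)
    also have "\<dots> = lam * s / 4"
      using s(1) unfolding s(2) by (simp add: power2_eq_square)
    finally show "lam * (s / 2) + - 3 * lam * (s / 2) / 2 + rho * yh / 2 * (1 / s) * (1 - tanh (1 / s * (s / 2)) ^ 2) = 0"
      using s(1) unfolding T_def by simp
  qed
  moreover have "sqrt (lam / (rho * D)) = 1 / s"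
    unfolding s_def by (simp add: real_sqrt_divide)
  ultimately show ?thesis
    unfolding S_fun_def by (simp add: power2_eq_square field_simps)
qed

definition stationarity_gap ::
    "(real \<Rightarrow> real \<Rightarrow> real) \<Rightarrow> real set \<Rightarrow> real set \<Rightarrow> real \<Rightarrow> real \<Rightarrow> bool" where
  "stationarity_gap f X Y lam g \<longleftrightarrow>
    (\<exists>yh\<in>Y. \<exists>xs\<in>X.
      (moreau_env (max_fun (hat_fun f yh) Y) X lam has_real_derivative 0) (at xs) \<and>
      (\<exists>d. (moreau_env (max_fun f Y) X lam has_real_derivative d) (at xs) \<and> \<bar>d\<bar> \<ge> g))"

lemma stationarity_gap_F_fun_bilinear:
  fixes lam mu D c :: real
  assumes lam: "0 < lam" and mu: "0 \<le> mu" and D: "0 \<le> D" and c: "mu * D / (4 * lam) \<le> c"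
  shows "stationarity_gap (F_fun 0 0 lam mu 0) {- c .. c} {- D / 2 .. D / 2} lam (mu * D / 2)"
proof -
  let ?f = "F_fun 0 0 lam mu 0" and ?X = "{- c .. c}" and ?Y = "{- D / 2 .. D / 2}"
  define xs where "xs = mu * D / (4 * lam)"
  have "0 \<le> xs"
    using lam mu D unfolding xs_def by simp
  then have xs: "xs \<in> ?X" "0 \<in> ?X"
    using c unfolding xs_def by auto
  have muD: "mu * (D / 2) = 2 * lam * xs"
    using lam unfolding xs_def by simp
  have Y: "D / 4 \<in> ?Y" "?Y \<noteq> {}"
    using D by auto
  have phi: "max_fun ?f ?Y = (\<lambda>x. - lam * x\<^sup>2 / 2 + mu * (D / 2) * \<bar>x\<bar>)"
    using max_fun_F_fun_bilinear[OF mu, of "D / 2"] D by simp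
  have "(moreau_env (max_fun (hat_fun ?f (D / 4)) ?Y) ?X lam has_real_derivative 2 * lam * (xs - xs)) (at xs)"
    unfolding max_fun_hat_fun[OF Y(2)]
  proof (rule moreau_env_has_real_derivative[where m = "lam / 2"])
    show "?f xs (D / 4) + lam * (xs - xs)\<^sup>2 + lam / 2 * (u - xs)\<^sup>2 \<le> ?f u (D / 4) + lam * (u - xs)\<^sup>2" for u
      using lam unfolding F_fun_def xs_def by (simp add: power2_eq_square field_simps)
  qed (use lam xs in auto)
  moreover have "(moreau_env (max_fun ?f ?Y) ?X lam has_real_derivative 2 * lam * (xs - 0)) (at xs)"
    unfolding phi muD
  proof (rule moreau_env_has_real_derivative[where m = "lam / 2"])
    fix u
    have "2 * lam * xs * u \<le> 2 * lam * xs * \<bar>u\<bar>"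
      using lam \<open>0 \<le> xs\<close> by (intro mult_left_mono) auto
    then show "- lam * 0\<^sup>2 / 2 + 2 * lam * xs * \<bar>0\<bar> + lam * (0 - xs)\<^sup>2 + lam / 2 * (u - 0)\<^sup>2
        \<le> - lam * u\<^sup>2 / 2 + 2 * lam * xs * \<bar>u\<bar> + lam * (u - xs)\<^sup>2"
      by (simp add: power2_eq_square algebra_simps)
  qed (use lam xs in auto)
  ultimately show ?thesis
    unfolding stationarity_gap_def using Y xs muD by force
qed

lemma stationarity_gap_S_fun:
  fixes lam rho D c :: real
  assumes lam: "0 < lam" and rho: "0 < rho" and D: "0 < D" and c: "2 / 3 * sqrt (rho * D / lam) \<le> c"
  shows "stationarity_gap (S_fun lam rho D) {- c .. c} {0 .. D} lam (sqrt (lam * rho * D) / 3)"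
proof -
  let ?S = "S_fun lam rho D" and ?X = "{- c .. c}" and ?Y = "{0 .. D}"
  define s where "s = sqrt (rho * D / lam)"
  define yh where "yh = D / (2 * (1 - tanh (1 / 2 :: real) ^ 2))"
  have "0 < s"
    using lam rho D unfolding s_def by auto
  have lam_s: "lam * s = sqrt (lam * rho * D)"
  proof -
    have "lam * rho * D = lam\<^sup>2 * (rho * D / lam)"
      using lam by (simp add: power2_eq_square)
    then show ?thesis
      using lam unfolding s_def by (metis abs_of_pos real_sqrt_abs real_sqrt_mult)
  qed
  define xs where "xs = s / 2"
  have xs: "xs \<in> ?X" "4 * xs / 3 \<in> ?X"
    using \<open>0 < s\<close> c[folded s_def] unfolding xs_def by auto
  have yh: "yh \<in> ?Y" and Y: "?Y \<noteq> {}"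
    using D tanh_half_sq_le unfolding yh_def by (auto simp: divide_le_eq)
  have "(moreau_env (max_fun (hat_fun ?S yh) ?Y) ?X lam has_real_derivative 2 * lam * (xs - xs)) (at xs)"
    unfolding max_fun_hat_fun[OF Y]
    by (rule moreau_env_has_real_derivative[where m = "lam / 4"])
      (use lam xs S_fun_anchor_prox_margin[OF lam rho D, folded s_def yh_def] in \<open>auto simp: xs_def\<close>)
  moreover have "(moreau_env (max_fun ?S ?Y) ?X lam has_real_derivative 2 * lam * (xs - 4 * xs / 3)) (at xs)"
    unfolding max_fun_S_fun[OF less_imp_le[OF rho] less_imp_le[OF D]]
    by (rule moreau_env_has_real_derivative[where m = "3 * lam / 4"])
      (use lam xs in \<open>auto simp: power2_eq_square field_simps\<close>)
  moreover have "\<bar>2 * lam * (xs - 4 * xs / 3)\<bar> = sqrt (lam * rho * D) / 3"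
    using lam \<open>0 < s\<close> unfolding xs_def lam_s[symmetric] by simp
  ultimately show ?thesis
    unfolding stationarity_gap_def using xs yh by force
qed

theorem proposition3:
  fixes lam mu rho D :: real
  assumes "lam > 0" and "mu > 0" and "rho > 0" and "D > 0"
  defines "X \<equiv> {- (mu * D / (2 * lam)) .. mu * D / (2 * lam)}"
  shows
   "(let f = F_fun 0 0 lam mu 0; Y = {- D / 2 .. D / 2} in
      \<exists>yh\<in>Y. \<exists>xs\<in>X.
        (moreau_env (max_fun (hat_fun f yh) Y) X lam has_real_derivative 0) (at xs) \<and>
        (\<exists>d. (moreau_env (max_fun f Y) X lam has_real_derivative d) (at xs) \<and>
             \<bar>d\<bar> \<ge> mu * D / 2))
    \<and>
    (mu \<ge> sqrt (2 * lam * rho / D) \<longrightarrow>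
     (let f = S_fun lam rho D; Y = {0 .. D} in
      \<exists>yh\<in>Y. \<exists>xs\<in>X.
        (moreau_env (max_fun (hat_fun f yh) Y) X lam has_real_derivative 0) (at xs) \<and>
        (\<exists>d. (moreau_env (max_fun f Y) X lam has_real_derivative d) (at xs) \<and>
             \<bar>d\<bar> \<ge> sqrt (lam * rho * D) / 3)))"
proof -
  note lam = \<open>lam > 0\<close> and mu = \<open>mu > 0\<close> and rho = \<open>rho > 0\<close> and D = \<open>D > 0\<close>
  define c where "c = mu * D / (2 * lam)"
  have X: "X = {- c .. c}"
    unfolding X_def c_def ..
  have "stationarity_gap (F_fun 0 0 lam mu 0) X {- D / 2 .. D / 2} lam (mu * D / 2)"
    unfolding X using lam mu D by (intro stationarity_gap_F_fun_bilinear) (auto simp: c_def field_simps)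
  moreover have "stationarity_gap (S_fun lam rho D) X {0 .. D} lam (sqrt (lam * rho * D) / 3)"
    if mu_ge: "sqrt (2 * lam * rho / D) \<le> mu"
  proof -
    have "rho * D / lam = 2 * lam * rho / D * (D\<^sup>2 / (2 * lam\<^sup>2))"
      using lam D by (simp add: power2_eq_square field_simps)
    also have "\<dots> \<le> mu\<^sup>2 * (D\<^sup>2 / (2 * lam\<^sup>2))"
      using sqrt_le_D[OF mu_ge] by (intro mult_right_mono) auto
    also have "\<dots> \<le> (3 / 2 * c)\<^sup>2"
      using lam mu D by (simp add: c_def power2_eq_square field_simps)
    finally have "sqrt (rho * D / lam) \<le> 3 / 2 * c"
      using lam mu D by (intro real_le_lsqrt) (auto simp: c_def)
    then show ?thesis
      unfolding X using lam rho D by (intro stationarity_gap_S_fun) auto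
  qed
  ultimately show ?thesis
    unfolding stationarity_gap_def Let_def by blast
qed

end
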